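(* There is a universal constant $C>0$ such that the following holds. Let $\delta\in(0,1]$, $k\geq 12/\delta^2$, $m\geq 4$, and let $T=(t_{ij})$ be an $m\times k$ real matrix. Then for any $y\in S^{k-1}$ there is a coordinate projection $P:\mathbb{R}^k\to\mathbb{R}^k$ with $\mathrm{rank}\,P\leq\delta k$ such that $$C^{-1}\delta^2\min_{\ell\leq m}|Ty|_\ell\leq\frac{\max_{i,j}|t_{ij}|}{\sqrt{k}}+\textstyle\max^{(\lfloor m/4\rfloor)}_{\ell\in[m]}|TP(y)|_\ell.$$
   Context: A coordinate projection is the orthogonal projection onto $\mathrm{span}\{e_j\}_{j\in J}$ for some subset $J$ of coordinates. For $v\in\mathbb{R}^m$, $|v|\in\mathbb{R}^m_+$ is the vector of absolute values of the coordinates, and $|v|_\ell$ its $\ell$-th coordinate. For a non-negative sequence $(a_\ell)_{\ell\in J}$ and $k\in\mathbb{N}$, $\max^{(k)}_{\ell\in J}a_\ell$ denotes its $k$-th largest element ($0$ if $k>|J|$). *)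

theory Defs
  imports Complex_Main
begin

text \<open>Vectors in R^k are represented as functions nat => real, relevant on {..<k};
  an m x k matrix T as nat => nat => real, relevant on {..<m} x {..<k}.\<close>

definition mat_vec :: "nat \<Rightarrow> (nat \<Rightarrow> nat \<Rightarrow> real) \<Rightarrow> (nat \<Rightarrow> real) \<Rightarrow> nat \<Rightarrow> real" where
  "mat_vec k T y = (\<lambda>i. \<Sum>j<k. T i j * y j)"

definition coord_proj :: "nat set \<Rightarrow> (nat \<Rightarrow> real) \<Rightarrow> nat \<Rightarrow> real" where
  "coord_proj J y = (\<lambda>j. if j \<in> J then y j else 0)"

text \<open>r-th largest element of (a l) for l in finite J (counted with multiplicity);
  0 if r > card J (and, by convention, if r = 0).\<close>
definition kth_largest :: "nat \<Rightarrow> nat set \<Rightarrow> (nat \<Rightarrow> real) \<Rightarrow> real" where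
  "kth_largest r J a =
     (if r = 0 \<or> r > card J then 0
      else rev (sort (map a (sorted_list_of_set J))) ! (r - 1))"

end

theory Submission
  imports Defs
begin

text \<open>
  Let \<open>a\<close> be the smallest entry of \<open>|T y|\<close> and \<open>t = \<delta>\<^sup>2 a / 10^7\<close>. If some entry of \<open>T\<close> has
  size \<open>t * sqrt k\<close> the bound holds with \<open>J = {}\<close>, so assume all entries are smaller. The
  coordinates with \<open>y j ^ 2 > 2 / (\<delta> k)\<close> form a set \<open>L\<close> with at most \<open>\<delta> k / 2\<close> elements.
  Choose \<open>D\<close> among the other coordinates, keeping each with probability \<open>\<delta> / 16\<close>, and split
  \<open>D\<close> uniformly at random into \<open>J\<close> and \<open>D - J\<close>. Fix a row. If the contribution of \<open>L\<close> to it is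
  at least \<open>2 t\<close>, then one of \<open>J\<close>, \<open>L \<union> J\<close> and one of \<open>D - J\<close>, \<open>L \<union> (D - J)\<close> carries a sum of
  size \<open>t\<close>. Otherwise the remaining coordinates contribute at least \<open>a / 2\<close>, and by Chebyshev
  the random \<open>D\<close> keeps, with probability \<open>19/20\<close>, either a large sum or a large energy
  \<open>\<Sum>j\<in>D. z j ^ 2\<close>; in the latter case Paley-Zygmund for the Rademacher sum
  \<open>sum z J - sum z (D - J)\<close> separates the two halves. Either way the four sets
  \<open>J, D - J, L \<union> J, L \<union> (D - J)\<close> hit every row at least once on average, while \<open>|D| > \<delta> k / 2\<close>
  has probability below \<open>3/100\<close>. So some outcome has \<open>m\<close> hits in total, and one of the four
  sets, all of size at most \<open>\<delta> k\<close>, gives a sum of size \<open>t\<close> on \<open>m / 4\<close> rows.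
\<close>

section \<open>Expectations over random subsets\<close>

text \<open>The expectation of \<open>F D\<close> for a random subset \<open>D\<close> of \<open>A\<close> containing each element independently
  with probability \<open>p\<close>; probabilities are expectations of \<open>of_bool\<close>.\<close>
definition subset_expect :: "real \<Rightarrow> 'a set \<Rightarrow> ('a set \<Rightarrow> real) \<Rightarrow> real" where
  "subset_expect p A F = (\<Sum>D\<in>Pow A. p ^ card D * (1 - p) ^ (card A - card D) * F D)"

lemma subset_expect_empty [simp]: "subset_expect p {} F = F {}"
  by (simp add: subset_expect_def)

lemma subset_expect_insert:
  assumes "finite A" "x \<notin> A"
  shows "subset_expect p (insert x A) F =
    (1 - p) * subset_expect p A F + p * subset_expect p A (\<lambda>D. F (insert x D))"
proof -
  let ?w = "\<lambda>D. p ^ card D * (1 - p) ^ (Suc (card A) - card D) * F D"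
  have inj: "inj_on (insert x) (Pow A)"
    using assms(2) by (auto simp: inj_on_def)
  have card_le: "card D \<le> card A" if "D \<in> Pow A" for D
    using that assms(1) by (simp add: card_mono)
  have "subset_expect p (insert x A) F = sum ?w (Pow A) + sum ?w (insert x ` Pow A)"
    unfolding subset_expect_def Pow_insert using assms
    by (subst sum.union_disjoint) auto
  also have "sum ?w (Pow A) = (1 - p) * subset_expect p A F"
    unfolding subset_expect_def sum_distrib_left
    by (rule sum.cong) (simp_all add: card_le Suc_diff_le)
  also have "sum ?w (insert x ` Pow A) = p * subset_expect p A (\<lambda>D. F (insert x D))"
    unfolding subset_expect_def sum_distrib_left sum.reindex[OF inj] o_def
  proof (rule sum.cong [OF refl])
    fix D assume D: "D \<in> Pow A"
    then have "card (insert x D) = Suc (card D)"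
      using assms finite_subset by (subst card_insert_disjoint) auto
    then show "?w (insert x D) = p * (p ^ card D * (1 - p) ^ (card A - card D) * F (insert x D))"
      using card_le [OF D] by simp
  qed
  finally show ?thesis .
qed

lemma subset_expect_cong:
  "(\<And>D. D \<subseteq> A \<Longrightarrow> F D = G D) \<Longrightarrow> subset_expect p A F = subset_expect p A G"
  unfolding subset_expect_def by (rule sum.cong) auto

lemma subset_expect_add:
  "subset_expect p A (\<lambda>D. F D + G D) = subset_expect p A F + subset_expect p A G"
  unfolding subset_expect_def by (simp add: algebra_simps sum.distrib)

lemma subset_expect_cmult: "subset_expect p A (\<lambda>D. c * F D) = c * subset_expect p A F"
  unfolding subset_expect_def by (simp add: algebra_simps sum_distrib_left)

lemma subset_expect_diff:
  "subset_expect p A (\<lambda>D. F D - G D) = subset_expect p A F - subset_expect p A G"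
  unfolding subset_expect_def by (simp add: algebra_simps sum_subtractf)

lemma subset_expect_sum:
  "subset_expect p A (\<lambda>D. \<Sum>l\<in>I. F l D) = (\<Sum>l\<in>I. subset_expect p A (F l))"
  unfolding subset_expect_def sum_distrib_left by (rule sum.swap)

lemma subset_expect_const: "finite A \<Longrightarrow> subset_expect p A (\<lambda>D. c) = c"
  by (induction A rule: finite_induct) (simp_all add: subset_expect_insert algebra_simps)

lemma subset_expect_mono:
  assumes "0 \<le> p" "p \<le> 1" "\<And>D. D \<subseteq> A \<Longrightarrow> F D \<le> G D"
  shows "subset_expect p A F \<le> subset_expect p A G"
  unfolding subset_expect_def using assms by (intro sum_mono mult_left_mono) auto

lemma subset_expect_lower_bound:
  "0 \<le> p \<Longrightarrow> p \<le> 1 \<Longrightarrow> finite A \<Longrightarrow> (\<And>D. D \<subseteq> A \<Longrightarrow> c \<le> F D) \<Longrightarrow> c \<le> subset_expect p A F"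
  using subset_expect_mono [of p A "\<lambda>D. c" F] subset_expect_const [of A p c] by simp

text \<open>The hypothesis \<open>p < 1\<close> gives the empty set positive weight, which the contradiction uses.\<close>
lemma subset_expect_obtain:
  assumes "finite A" "0 \<le> p" "p < 1" "c \<le> subset_expect p A F"
  obtains D where "D \<subseteq> A" "c \<le> F D"
proof -
  have "\<exists>D \<subseteq> A. c \<le> F D"
  proof (rule ccontr)
    assume "\<not> ?thesis"
    then have lt: "F D < c" if "D \<subseteq> A" for D
      using that by auto
    have "0 < (1 - p) ^ card A * (c - F {})"
      using lt [of "{}"] assms(3) by simp
    also have "\<dots> \<le> subset_expect p A (\<lambda>D. c - F D)"
      unfolding subset_expect_def
      using member_le_sum [of "{}" "Pow A" "\<lambda>D. p ^ card D * (1 - p) ^ (card A - card D) * (c - F D)"]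
        assms(1-3) lt by (simp add: less_imp_le)
    also have "\<dots> = c - subset_expect p A F"
      using subset_expect_diff [of p A "\<lambda>D. c" F] subset_expect_const [OF assms(1)] by simp
    finally show False using assms(4) by simp
  qed
  then show thesis using that by blast
qed

lemmas subset_expect_linear_simps =
  subset_expect_add subset_expect_diff subset_expect_cmult subset_expect_const

lemma subset_expect_insert_sum:
  assumes "finite A" "x \<notin> A"
  shows "subset_expect p (insert x A) (\<lambda>D. G (sum f D)) =
    (1 - p) * subset_expect p A (\<lambda>D. G (sum f D)) + p * subset_expect p A (\<lambda>D. G (f x + sum f D))"
proof -
  have "subset_expect p A (\<lambda>D. G (sum f (insert x D))) = subset_expect p A (\<lambda>D. G (f x + sum f D))"
    using assms by (intro subset_expect_cong) (metis finite_subset subsetD sum.insert)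
  then show ?thesis using subset_expect_insert [OF assms] by simp
qed

lemma subset_expect_sum_subset:
  "finite A \<Longrightarrow> subset_expect p A (\<lambda>D. sum f D) = p * sum f A"
proof (induction A rule: finite_induct)
  case (insert x A)
  then show ?case
    using subset_expect_insert_sum [OF insert(1,2), of p "\<lambda>s. s"]
    by (simp add: subset_expect_linear_simps algebra_simps)
qed simp

lemma subset_expect_sum_subset_squared:
  "finite A \<Longrightarrow> subset_expect p A (\<lambda>D. (sum f D)\<^sup>2) =
    p\<^sup>2 * (sum f A)\<^sup>2 + p * (1 - p) * (\<Sum>j\<in>A. (f j)\<^sup>2)"
proof (induction A rule: finite_induct)
  case (insert x A)
  have "subset_expect p A (\<lambda>D. (f x + sum f D)\<^sup>2) =
      subset_expect p A (\<lambda>D. (f x)\<^sup>2 + (2 * f x) * sum f D + (sum f D)\<^sup>2)"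
    by (simp add: power2_sum algebra_simps)
  also have "\<dots> = (f x)\<^sup>2 + 2 * f x * (p * sum f A) + subset_expect p A (\<lambda>D. (sum f D)\<^sup>2)"
    using insert(1) by (simp only: subset_expect_linear_simps subset_expect_sum_subset)
  finally show ?case
    using subset_expect_insert_sum [OF insert(1,2), of p "\<lambda>s. s\<^sup>2" f] insert
    by (simp add: power2_eq_square algebra_simps)
qed simp

lemma subset_expect_sum_subset_variance:
  assumes "finite A"
  shows "subset_expect p A (\<lambda>D. (sum f D - p * sum f A)\<^sup>2) = p * (1 - p) * (\<Sum>j\<in>A. (f j)\<^sup>2)"
proof -
  let ?m = "p * sum f A"
  have "subset_expect p A (\<lambda>D. (sum f D - ?m)\<^sup>2) =
      subset_expect p A (\<lambda>D. (sum f D)\<^sup>2 + (- 2 * ?m) * sum f D + ?m\<^sup>2)"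
    by (simp add: power2_diff algebra_simps)
  also have "\<dots> = subset_expect p A (\<lambda>D. (sum f D)\<^sup>2) + (- 2 * ?m) * (p * sum f A) + ?m\<^sup>2"
    using assms by (simp only: subset_expect_linear_simps subset_expect_sum_subset)
  finally show ?thesis
    using subset_expect_sum_subset_squared [OF assms, where p = p and f = f] by (simp add: power2_eq_square algebra_simps)
qed

lemma subset_expect_sum_subset_deviation:
  assumes "finite A" "0 \<le> p" "p \<le> 1" "0 < r"
  shows "subset_expect p A (\<lambda>D. of_bool (r \<le> \<bar>sum f D - p * sum f A\<bar>))
    \<le> p * (1 - p) * (\<Sum>j\<in>A. (f j)\<^sup>2) / r\<^sup>2"
proof -
  have "of_bool (r \<le> \<bar>x\<bar>) \<le> (1 / r\<^sup>2) * x\<^sup>2" for x :: real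
  proof (cases "r \<le> \<bar>x\<bar>")
    case True
    then have "r\<^sup>2 \<le> x\<^sup>2" using assms(4) by (metis abs_le_square_iff abs_of_pos)
    then show ?thesis using True assms(4) by (simp add: field_simps)
  qed simp
  then have "subset_expect p A (\<lambda>D. of_bool (r \<le> \<bar>sum f D - p * sum f A\<bar>))
      \<le> subset_expect p A (\<lambda>D. (1 / r\<^sup>2) * (sum f D - p * sum f A)\<^sup>2)"
    using assms by (intro subset_expect_mono) auto
  also have "\<dots> = p * (1 - p) * (\<Sum>j\<in>A. (f j)\<^sup>2) / r\<^sup>2"
    by (simp only: subset_expect_cmult subset_expect_sum_subset_variance [OF assms(1)]) simp
  finally show ?thesis .
qed

lemma subset_expect_of_bool_mono:
  "0 \<le> p \<Longrightarrow> p \<le> 1 \<Longrightarrow> (\<And>D. D \<subseteq> A \<Longrightarrow> P D \<Longrightarrow> Q D) \<Longrightarrow>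
    subset_expect p A (\<lambda>D. of_bool (P D)) \<le> subset_expect p A (\<lambda>D. of_bool (Q D))"
  by (intro subset_expect_mono) auto

lemma subset_expect_of_bool_complement:
  assumes "0 \<le> p" "p \<le> 1" "finite A" "subset_expect p A (\<lambda>D. of_bool (Q D)) \<le> 1 - c"
    "\<And>D. D \<subseteq> A \<Longrightarrow> \<not> Q D \<Longrightarrow> P D"
  shows "c \<le> subset_expect p A (\<lambda>D. of_bool (P D))"
proof -
  have "subset_expect p A (\<lambda>D. 1 - of_bool (Q D)) \<le> subset_expect p A (\<lambda>D. of_bool (P D))"
    using assms by (intro subset_expect_mono) auto
  then show ?thesis
    using assms(3,4) by (simp add: subset_expect_diff subset_expect_const)
qed

lemma le_threshold_amgm:
  fixes x :: real
  assumes "0 \<le> r" "0 < c"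
  shows "x \<le> r + x\<^sup>2 / (2 * c) + (c / 2) * of_bool (r \<le> x)"
proof (cases "r \<le> x")
  case True
  have "2 * c * x \<le> x\<^sup>2 + c\<^sup>2"
    using sum_squares_bound [of x c] by (simp add: power2_eq_square algebra_simps)
  then have "x \<le> x\<^sup>2 / (2 * c) + c / 2"
    using assms(2) by (simp add: field_simps power2_eq_square)
  then show ?thesis using True assms(1) by simp
next
  case False
  have "0 \<le> x\<^sup>2 / (2 * c)" using assms(2) by simp
  then show ?thesis using False by simp
qed

lemma subset_expect_paley_zygmund:
  assumes "finite A" "0 \<le> p" "p \<le> 1" "0 \<le> r" "r < subset_expect p A X"
    and moment: "subset_expect p A (\<lambda>D. (X D)\<^sup>2) \<le> K"
  shows "(subset_expect p A X - r)\<^sup>2 / K \<le> subset_expect p A (\<lambda>D. of_bool (r \<le> X D))"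
proof -
  let ?E = "subset_expect p A X" and ?P = "subset_expect p A (\<lambda>D. of_bool (r \<le> X D))"
  have P_nonneg: "0 \<le> ?P"
    using assms by (intro subset_expect_lower_bound) auto
  show ?thesis
  proof (cases "K \<le> 0")
    case True
    then show ?thesis using P_nonneg by (meson divide_nonneg_nonpos order_trans zero_le_power2)
  next
    case False
    define c where "c = K / (?E - r)" \<comment> \<open>balances the two error terms of \<open>le_threshold_amgm\<close>\<close>
    have c_pos: "0 < c" using False assms(5) by (simp add: c_def)
    have "?E \<le> subset_expect p A (\<lambda>D. r + (1 / (2 * c)) * (X D)\<^sup>2 + (c / 2) * of_bool (r \<le> X D))"
      using le_threshold_amgm [OF assms(4) c_pos] assms(2,3) by (intro subset_expect_mono) auto
    also have "\<dots> = r + (1 / (2 * c)) * subset_expect p A (\<lambda>D. (X D)\<^sup>2) + (c / 2) * ?P"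
      using assms(1) by (simp only: subset_expect_linear_simps)
    also have "\<dots> \<le> r + (1 / (2 * c)) * K + (c / 2) * ?P"
      using moment c_pos by (simp add: divide_right_mono)
    finally have "?E - r \<le> (?E - r) / 2 + (c / 2) * ?P"
      using False assms(5) by (simp add: c_def)
    then have "(?E - r) / c \<le> ?P"
      using c_pos by (simp add: field_simps)
    then show ?thesis
      using False assms(5) by (simp add: c_def power2_eq_square)
  qed
qed

section \<open>Rademacher sums\<close>

text \<open>For \<open>J \<subseteq> D\<close>, \<open>2 * sum z J - sum z D\<close> is the signed sum of \<open>z\<close> over \<open>D\<close> with sign \<open>+1\<close>
  exactly on \<open>J\<close>; under \<open>subset_expect (1/2) D\<close> it is a Rademacher sum.\<close>

lemma rademacher_second_moment:
  assumes "finite D"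
  shows "subset_expect (1/2) D (\<lambda>J. (2 * sum z J - sum z D)\<^sup>2) = (\<Sum>j\<in>D. (z j)\<^sup>2)"
proof -
  have "subset_expect (1/2) D (\<lambda>J. (2 * sum z J - sum z D)\<^sup>2) =
      subset_expect (1/2) D (\<lambda>J. 4 * (sum z J - 1/2 * sum z D)\<^sup>2)"
    by (simp add: power2_eq_square algebra_simps)
  then show ?thesis
    by (simp only: subset_expect_cmult subset_expect_sum_subset_variance [OF assms]) simp
qed

lemma rademacher_fourth_moment:
  "finite D \<Longrightarrow> subset_expect (1/2) D (\<lambda>J. (2 * sum z J - sum z D) ^ 4) \<le> 3 * (\<Sum>j\<in>D. (z j)\<^sup>2)\<^sup>2"
proof (induction D rule: finite_induct)
  case (insert x D)
  let ?Y = "\<lambda>J. 2 * sum z J - sum z D" and ?s = "\<Sum>j\<in>D. (z j)\<^sup>2" and ?a = "z x"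
  have sum_insert: "sum z (insert x J) = ?a + sum z J" if "J \<subseteq> D" for J
    using insert(1,2) that by (meson finite_subset subsetD sum.insert)
  have "subset_expect (1/2) (insert x D) (\<lambda>J. (2 * sum z J - sum z (insert x D)) ^ 4) =
      1/2 * subset_expect (1/2) D (\<lambda>J. (?Y J - ?a) ^ 4) + 1/2 * subset_expect (1/2) D (\<lambda>J. (?Y J + ?a) ^ 4)"
    unfolding subset_expect_insert [OF insert(1,2)]
    by (intro arg_cong2 [where f = "(+)"] arg_cong2 [where f = "(*)"] subset_expect_cong)
      (simp_all add: sum_insert insert(1,2) algebra_simps)
  also have "\<dots> = subset_expect (1/2) D (\<lambda>J. 1/2 * (?Y J - ?a) ^ 4 + 1/2 * (?Y J + ?a) ^ 4)"
    by (simp only: subset_expect_add subset_expect_cmult)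
  also have "\<dots> = subset_expect (1/2) D (\<lambda>J. (?Y J) ^ 4 + (6 * ?a\<^sup>2) * (?Y J)\<^sup>2 + ?a ^ 4)"
    by (intro subset_expect_cong) (simp add: power2_eq_square power4_eq_xxxx algebra_simps)
  also have "\<dots> = subset_expect (1/2) D (\<lambda>J. (?Y J) ^ 4) + 6 * ?a\<^sup>2 * ?s + ?a ^ 4"
    using insert(1) by (simp only: subset_expect_linear_simps rademacher_second_moment)
  also have "\<dots> \<le> 3 * ?s\<^sup>2 + 6 * ?a\<^sup>2 * ?s + ?a ^ 4"
    using insert(3) by simp
  also have "\<dots> \<le> 3 * (?s + ?a\<^sup>2)\<^sup>2"
    using zero_le_power2 [of "?a\<^sup>2"] by (simp add: power2_eq_square power4_eq_xxxx algebra_simps)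
  finally show ?case
    using insert(1,2) by (simp add: add.commute)
qed simp

lemma rademacher_anticoncentration:
  assumes "finite D" "0 \<le> r" "r < (\<Sum>j\<in>D. (z j)\<^sup>2)"
  shows "((\<Sum>j\<in>D. (z j)\<^sup>2) - r)\<^sup>2 / (3 * (\<Sum>j\<in>D. (z j)\<^sup>2)\<^sup>2)
    \<le> subset_expect (1/2) D (\<lambda>J. of_bool (r \<le> (2 * sum z J - sum z D)\<^sup>2))"
  using subset_expect_paley_zygmund [of D "1/2" r "\<lambda>J. (2 * sum z J - sum z D)\<^sup>2"]
    rademacher_second_moment [OF assms(1)] rademacher_fourth_moment [OF assms(1)] assms
  by (simp add: power_mult [symmetric])

section \<open>Splitting a random subset\<close>

text \<open>With \<open>u\<close> the contribution of a fixed set \<open>L\<close> disjoint from \<open>D\<close>, this counts how many of the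
  four candidate sets \<open>J\<close>, \<open>D - J\<close>, \<open>L \<union> J\<close>, \<open>L \<union> (D - J)\<close> carry a sum of size at least \<open>t\<close>.\<close>
definition split_hits :: "real \<Rightarrow> real \<Rightarrow> ('a \<Rightarrow> real) \<Rightarrow> 'a set \<Rightarrow> 'a set \<Rightarrow> real" where
  "split_hits t u z D J =
     of_bool (t \<le> \<bar>sum z J\<bar>) + of_bool (t \<le> \<bar>sum z (D - J)\<bar>) +
     of_bool (t \<le> \<bar>u + sum z J\<bar>) + of_bool (t \<le> \<bar>u + sum z (D - J)\<bar>)"

lemma split_hits_nonneg: "0 \<le> split_hits t u z D J"
  by (simp add: split_hits_def)

lemma split_hits_ge_two:
  assumes "finite D" "J \<subseteq> D" "2 * t \<le> \<bar>u\<bar> \<or> 12 * t \<le> \<bar>sum z D\<bar>"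
  shows "2 \<le> split_hits t u z D J"
proof -
  have "sum z D = sum z J + sum z (D - J)"
    using assms(1,2) by (metis add.commute sum.subset_diff)
  then show ?thesis
    using assms(3) by (auto simp: split_hits_def)
qed

lemma split_hits_eq_four:
  assumes "finite D" "J \<subseteq> D" "0 < t" "\<bar>u\<bar> < 2 * t" "\<bar>sum z D\<bar> < 12 * t"
    and "18 * t \<le> \<bar>2 * sum z J - sum z D\<bar>"
  shows "split_hits t u z D J = 4"
proof -
  have "sum z D = sum z J + sum z (D - J)"
    using assms(1,2) by (metis add.commute sum.subset_diff)
  then show ?thesis
    using assms(3-6) by (auto simp: split_hits_def)
qed

lemma split_hits_expect_ge_two:
  assumes "finite D" "2 * t \<le> \<bar>u\<bar> \<or> 12 * t \<le> \<bar>sum z D\<bar>"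
  shows "2 \<le> subset_expect (1/2) D (split_hits t u z D)"
  using assms by (intro subset_expect_lower_bound split_hits_ge_two) auto

lemma split_hits_expect_spread:
  assumes "finite D" "0 < t" "\<bar>u\<bar> < 2 * t" "\<bar>sum z D\<bar> < 12 * t"
    and spread: "324000 * t\<^sup>2 \<le> (\<Sum>j\<in>D. (z j)\<^sup>2)"
  shows "133/100 \<le> subset_expect (1/2) D (split_hits t u z D)"
proof -
  let ?s = "\<Sum>j\<in>D. (z j)\<^sup>2" and ?r = "324 * t\<^sup>2"
  let ?event = "\<lambda>J. of_bool (?r \<le> (2 * sum z J - sum z D)\<^sup>2)"
  have r_pos: "0 < ?r" using assms(2) by simp
  have "4 * ?event J \<le> split_hits t u z D J" if "J \<subseteq> D" for J
  proof (cases "?r \<le> (2 * sum z J - sum z D)\<^sup>2")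
    case True
    then have "(18 * t)\<^sup>2 \<le> (2 * sum z J - sum z D)\<^sup>2" by (simp add: power2_eq_square)
    then have "18 * t \<le> \<bar>2 * sum z J - sum z D\<bar>"
      using assms(2) abs_le_square_iff [of "18 * t"] by simp
    then show ?thesis using split_hits_eq_four [OF assms(1) that assms(2-4)] by simp
  qed (simp add: split_hits_nonneg)
  then have "4 * subset_expect (1/2) D ?event \<le> subset_expect (1/2) D (split_hits t u z D)"
    by (simp only: subset_expect_cmult [symmetric]) (intro subset_expect_mono, auto)
  moreover have "(?s - ?r)\<^sup>2 / (3 * ?s\<^sup>2) \<le> subset_expect (1/2) D ?event"
    using spread r_pos by (intro rademacher_anticoncentration [OF assms(1)]) linarith+
  moreover have "133/400 \<le> (?s - ?r)\<^sup>2 / (3 * ?s\<^sup>2)"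
  proof -
    have s_pos: "0 < ?s" using spread r_pos by linarith
    have "999/1000 * ?s \<le> ?s - ?r" using spread by simp
    then have "(999/1000 * ?s)\<^sup>2 \<le> (?s - ?r)\<^sup>2" using s_pos by (intro power_mono) auto
    then have "(999/1000 * ?s)\<^sup>2 / (3 * ?s\<^sup>2) \<le> (?s - ?r)\<^sup>2 / (3 * ?s\<^sup>2)"
      by (intro divide_right_mono) auto
    moreover have "(999/1000 * ?s)\<^sup>2 / (3 * ?s\<^sup>2) = 998001/3000000"
      using s_pos by (simp add: power2_eq_square)
    ultimately show ?thesis by linarith
  qed
  ultimately show ?thesis by linarith
qed

lemma split_hits_expect_sum_or_energy:
  assumes "finite D" "0 < t" "\<bar>u\<bar> < 2 * t"
    and "12 * t \<le> \<bar>sum z D\<bar> \<or> 324000 * t\<^sup>2 \<le> (\<Sum>j\<in>D. (z j)\<^sup>2)"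
  shows "133/100 \<le> subset_expect (1/2) D (split_hits t u z D)"
proof (cases "12 * t \<le> \<bar>sum z D\<bar>")
  case True
  then have "2 \<le> subset_expect (1/2) D (split_hits t u z D)"
    by (intro split_hits_expect_ge_two [OF assms(1)]) simp
  then show ?thesis by simp
next
  case False
  then show ?thesis
    using assms by (intro split_hits_expect_spread) auto
qed

lemma subset_expect_card_tail:
  assumes "finite A" "card A \<le> n" "0 < p" "p \<le> 1" "0 < n"
  shows "subset_expect p A (\<lambda>D. of_bool (8 * p * n < card D)) \<le> 1 / (49 * p * n)"
proof -
  have "subset_expect p A (\<lambda>D. of_bool (8 * p * n < card D))
      \<le> subset_expect p A (\<lambda>D. of_bool (7 * p * n \<le> \<bar>(\<Sum>j\<in>D. 1) - p * (\<Sum>j\<in>A. 1)\<bar>))"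
  proof (intro subset_expect_mono)
    fix D
    have "p * card A \<le> p * n" using assms(2,3) by simp
    then show "of_bool (8 * p * n < card D) \<le> (of_bool (7 * p * n \<le> \<bar>(\<Sum>j\<in>D. 1) - p * (\<Sum>j\<in>A. 1)\<bar>) :: real)"
      by auto
  qed (use assms in auto)
  also have "\<dots> \<le> p * (1 - p) * card A / (7 * p * n)\<^sup>2"
    using subset_expect_sum_subset_deviation [of A p "7 * p * n" "\<lambda>j. 1"] assms by simp
  also have "\<dots> \<le> p * n / (7 * p * n)\<^sup>2"
  proof (intro divide_right_mono)
    have "(1 - p) * card A \<le> 1 * real n" using assms by (intro mult_mono) auto
    then show "p * (1 - p) * card A \<le> p * n" using assms(3) by (simp add: mult.assoc)
  qed simp
  also have "\<dots> = 1 / (49 * p * n)"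
    using assms by (simp add: power2_eq_square)
  finally show ?thesis .
qed

lemma subset_expect_sum_stays_large:
  assumes "finite A" "0 < p" "p \<le> 1" "sum z A \<noteq> 0"
    and concentrated: "(\<Sum>j\<in>A. (z j)\<^sup>2) \<le> p * (sum z A)\<^sup>2 / 80"
  shows "19/20 \<le> subset_expect p A (\<lambda>D. of_bool (p * \<bar>sum z A\<bar> / 2 \<le> \<bar>sum z D\<bar>))"
proof (rule subset_expect_of_bool_complement)
  let ?S = "sum z A" and ?r = "p * \<bar>sum z A\<bar> / 2"
  have r_pos: "0 < ?r" using assms(2,4) by simp
  have "subset_expect p A (\<lambda>D. of_bool (?r \<le> \<bar>sum z D - p * ?S\<bar>)) \<le> p * (1 - p) * (\<Sum>j\<in>A. (z j)\<^sup>2) / ?r\<^sup>2"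
    using assms(1-3) r_pos by (intro subset_expect_sum_subset_deviation) auto
  also have "\<dots> \<le> p * (p * ?S\<^sup>2 / 80) / ?r\<^sup>2"
    using assms(2,3) concentrated by (intro divide_right_mono mult_mono) (auto intro: sum_nonneg)
  also have "\<dots> = 1/20"
    using assms(2,4) by (simp add: power2_eq_square field_simps)
  finally show "subset_expect p A (\<lambda>D. of_bool (?r \<le> \<bar>sum z D - p * ?S\<bar>)) \<le> 1 - 19/20"
    by simp
  show "?r \<le> \<bar>sum z D\<bar>" if "\<not> ?r \<le> \<bar>sum z D - p * ?S\<bar>" for D
  proof -
    have "p * \<bar>?S\<bar> \<le> \<bar>sum z D\<bar> + \<bar>sum z D - p * ?S\<bar>"
      using assms(2) abs_triangle_ineq2 [of "sum z D" "p * ?S"] by (simp add: abs_mult)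
    then show ?thesis using that by linarith
  qed
qed (use assms in auto)

lemma subset_expect_sum_squares_stays_large:
  assumes "finite A" "0 < p" "p \<le> 1" "0 < b"
    and small: "\<And>j. j \<in> A \<Longrightarrow> (z j)\<^sup>2 \<le> b"
    and spread: "80 * b \<le> p * (\<Sum>j\<in>A. (z j)\<^sup>2)"
  shows "19/20 \<le> subset_expect p A (\<lambda>D. of_bool (p * (\<Sum>j\<in>A. (z j)\<^sup>2) / 2 \<le> (\<Sum>j\<in>D. (z j)\<^sup>2)))"
proof (rule subset_expect_of_bool_complement)
  let ?Q = "\<Sum>j\<in>A. (z j)\<^sup>2" and ?r = "p * (\<Sum>j\<in>A. (z j)\<^sup>2) / 2"
  have r_pos: "0 < ?r" using assms(2,4) spread by simp
  have fourth: "(\<Sum>j\<in>A. ((z j)\<^sup>2)\<^sup>2) \<le> b * ?Q"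
    unfolding sum_distrib_left power2_eq_square [of "(z _)\<^sup>2"]
    using small by (intro sum_mono mult_right_mono) auto
  have "subset_expect p A (\<lambda>D. of_bool (?r \<le> \<bar>(\<Sum>j\<in>D. (z j)\<^sup>2) - p * ?Q\<bar>))
      \<le> p * (1 - p) * (\<Sum>j\<in>A. ((z j)\<^sup>2)\<^sup>2) / ?r\<^sup>2"
    using assms(1-3) r_pos by (intro subset_expect_sum_subset_deviation) auto
  also have "\<dots> \<le> p * (b * ?Q) / ?r\<^sup>2"
    using assms(2,3) fourth by (intro divide_right_mono mult_mono) (auto intro: sum_nonneg)
  also have "\<dots> = 4 * b / (p * ?Q)"
    using r_pos assms(2) by (simp add: power2_eq_square field_simps)
  also have "\<dots> \<le> 1/20"
    using spread r_pos by (simp add: field_simps)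
  finally show "subset_expect p A (\<lambda>D. of_bool (?r \<le> \<bar>(\<Sum>j\<in>D. (z j)\<^sup>2) - p * ?Q\<bar>)) \<le> 1 - 19/20"
    by simp
  show "?r \<le> (\<Sum>j\<in>D. (z j)\<^sup>2)" if "\<not> ?r \<le> \<bar>(\<Sum>j\<in>D. (z j)\<^sup>2) - p * ?Q\<bar>" for D
    using that by linarith
qed (use assms in auto)

lemma subset_expect_sum_or_energy_large:
  assumes "finite A" "0 < p" "p \<le> 1" "0 < t" "14400 * t \<le> p * a"
    and large: "a / 2 \<le> \<bar>sum z A\<bar>"
    and small: "\<And>j. j \<in> A \<Longrightarrow> (z j)\<^sup>2 \<le> p\<^sup>2 * a\<^sup>2 / 25600"
  shows "19/20 \<le> subset_expect p A
    (\<lambda>D. of_bool (12 * t \<le> \<bar>sum z D\<bar> \<or> 324000 * t\<^sup>2 \<le> (\<Sum>j\<in>D. (z j)\<^sup>2)))"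
proof -
  let ?S = "sum z A" and ?Q = "\<Sum>j\<in>A. (z j)\<^sup>2" and ?b = "p\<^sup>2 * a\<^sup>2 / 25600"
  have "0 < p * a" using assms(4,5) by linarith
  then have a_pos: "0 < a" using assms(2) by (simp add: zero_less_mult_iff)
  have "(a / 2)\<^sup>2 \<le> \<bar>?S\<bar>\<^sup>2" using large a_pos by (intro power_mono) auto
  then have S_sq: "a\<^sup>2 / 4 \<le> ?S\<^sup>2" by (simp add: power_divide)
  have p01: "0 \<le> p" "p \<le> 1" using assms(2,3) by auto
  show ?thesis
  proof (cases "?Q \<le> p * ?S\<^sup>2 / 80")
    case True
    have "12 * t \<le> p * (a / 2) / 2" using assms(5) a_pos assms(4) by simp
    also have "\<dots> \<le> p * \<bar>?S\<bar> / 2" using large assms(2) by simp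
    finally have "subset_expect p A (\<lambda>D. of_bool (p * \<bar>?S\<bar> / 2 \<le> \<bar>sum z D\<bar>))
        \<le> subset_expect p A (\<lambda>D. of_bool (12 * t \<le> \<bar>sum z D\<bar> \<or> 324000 * t\<^sup>2 \<le> (\<Sum>j\<in>D. (z j)\<^sup>2)))"
      by (intro subset_expect_of_bool_mono [OF p01]) auto
    moreover have "19/20 \<le> subset_expect p A (\<lambda>D. of_bool (p * \<bar>?S\<bar> / 2 \<le> \<bar>sum z D\<bar>))"
      using large a_pos by (intro subset_expect_sum_stays_large [OF assms(1-3) _ True]) auto
    ultimately show ?thesis by linarith
  next
    case False
    have "80 * ?b \<le> p * (p * ?S\<^sup>2 / 80)"
      using S_sq assms(2) by (simp add: power2_eq_square field_simps)
    also have "\<dots> \<le> p * ?Q" using False assms(2) by simp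
    finally have spread: "80 * ?b \<le> p * ?Q" .
    have "t\<^sup>2 \<le> (p * a / 14400)\<^sup>2" using assms(4,5) by (intro power_mono) auto
    then have "207360000 * t\<^sup>2 \<le> (p * a)\<^sup>2" by (simp add: power_divide)
    moreover have "(p * a)\<^sup>2 \<le> 320 * (p * ?Q)" using spread by (simp add: power_mult_distrib mult.commute)
    ultimately have "324000 * t\<^sup>2 \<le> p * ?Q / 2" by linarith
    then have "subset_expect p A (\<lambda>D. of_bool (p * ?Q / 2 \<le> (\<Sum>j\<in>D. (z j)\<^sup>2)))
        \<le> subset_expect p A (\<lambda>D. of_bool (12 * t \<le> \<bar>sum z D\<bar> \<or> 324000 * t\<^sup>2 \<le> (\<Sum>j\<in>D. (z j)\<^sup>2)))"
      by (intro subset_expect_of_bool_mono [OF p01]) auto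
    moreover have "19/20 \<le> subset_expect p A (\<lambda>D. of_bool (p * ?Q / 2 \<le> (\<Sum>j\<in>D. (z j)\<^sup>2)))"
      using a_pos assms(2) small spread
      by (intro subset_expect_sum_squares_stays_large [OF assms(1-3), where b = ?b]) auto
    ultimately show ?thesis by linarith
  qed
qed

lemma split_hits_row_expectation:
  assumes "finite A" "0 < p" "p \<le> 1/2" "0 < t" "14400 * t \<le> p * a"
    and row: "a \<le> \<bar>u + sum z A\<bar>"
    and small: "\<And>j. j \<in> A \<Longrightarrow> (z j)\<^sup>2 \<le> p\<^sup>2 * a\<^sup>2 / 25600"
    and rarely_bad: "subset_expect p A (\<lambda>D. of_bool (\<not> good D)) \<le> 3/100"
  shows "1 \<le> subset_expect p A (\<lambda>D. of_bool (good D) * subset_expect (1/2) D (split_hits t u z D))"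
proof -
  let ?H = "\<lambda>D. of_bool (good D) * subset_expect (1/2) D (split_hits t u z D)"
  let ?bad = "\<lambda>D. of_bool (\<not> good D) :: real"
  have p01: "0 \<le> p" "p \<le> 1" using assms(2,3) by auto
  have fin: "finite D" if "D \<subseteq> A" for D using assms(1) that finite_subset by blast
  have hits_nonneg: "0 \<le> subset_expect (1/2) D (split_hits t u z D)" if "D \<subseteq> A" for D
    using fin [OF that] by (intro subset_expect_lower_bound) (auto simp: split_hits_nonneg)
  show ?thesis
  proof (cases "2 * t \<le> \<bar>u\<bar>")
    case True
    have "subset_expect p A (\<lambda>D. 2 - 2 * ?bad D) \<le> subset_expect p A ?H"
      using split_hits_expect_ge_two [OF fin] True by (intro subset_expect_mono [OF p01]) auto
    then show ?thesis
      using rarely_bad assms(1) by (simp add: subset_expect_linear_simps)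
  next
    case False
    let ?event = "\<lambda>D. 12 * t \<le> \<bar>sum z D\<bar> \<or> 324000 * t\<^sup>2 \<le> (\<Sum>j\<in>D. (z j)\<^sup>2)"
    have "0 < p * a" using assms(4,5) by linarith
    then have "p * a \<le> a / 2" using assms(2,3) by (simp add: zero_less_mult_iff)
    then have "2 * t \<le> a / 2" using assms(4,5) by linarith
    then have large: "a / 2 \<le> \<bar>sum z A\<bar>"
      using row False abs_triangle_ineq [of u "sum z A"] by linarith
    have "133/100 * of_bool (?event D) - 133/100 * ?bad D \<le> ?H D" if "D \<subseteq> A" for D
    proof (cases "good D \<and> ?event D")
      case True
      have "133/100 \<le> subset_expect (1/2) D (split_hits t u z D)"
        using True False by (intro split_hits_expect_sum_or_energy [OF fin [OF that] assms(4)]) auto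
      then show ?thesis using True by simp
    qed (use hits_nonneg [OF that] in auto)
    then have "subset_expect p A (\<lambda>D. 133/100 * of_bool (?event D) - 133/100 * ?bad D)
        \<le> subset_expect p A ?H"
      by (intro subset_expect_mono [OF p01])
    moreover have "19/20 \<le> subset_expect p A (\<lambda>D. of_bool (?event D))"
      using p01 by (intro subset_expect_sum_or_energy_large [OF assms(1,2) _ assms(4,5) large small])
    ultimately show ?thesis \<comment> \<open>\<open>133/100 * (19/20 - 3/100) \<ge> 1\<close>\<close>
      using rarely_bad by (simp only: subset_expect_linear_simps)
  qed
qed

lemma subset_expect_obtain_split:
  assumes "finite A" "0 \<le> p" "p < 1" "finite I" "I \<noteq> {}"
    and rows: "\<And>l. l \<in> I \<Longrightarrow> 1 \<le> subset_expect p A (\<lambda>D. of_bool (good D) * subset_expect (1/2) D (F l D))"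
  obtains D J where "D \<subseteq> A" "good D" "J \<subseteq> D" "real (card I) \<le> (\<Sum>l\<in>I. F l D J)"
proof -
  let ?G = "\<lambda>D J. \<Sum>l\<in>I. F l D J"
  have "real (card I) \<le> (\<Sum>l\<in>I. subset_expect p A (\<lambda>D. of_bool (good D) * subset_expect (1/2) D (F l D)))"
    using sum_mono [OF rows] by simp
  also have "\<dots> = subset_expect p A (\<lambda>D. of_bool (good D) * subset_expect (1/2) D (?G D))"
    by (simp only: subset_expect_sum [symmetric])
      (intro subset_expect_cong, simp add: subset_expect_sum sum_distrib_left)
  finally obtain D where D: "D \<subseteq> A" "real (card I) \<le> of_bool (good D) * subset_expect (1/2) D (?G D)"
    using subset_expect_obtain [OF assms(1-3)] by blast
  have "good D" using D(2) assms(4,5) by (cases "good D") (auto simp: card_gt_0_iff)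
  moreover have "finite D" using D(1) assms(1) finite_subset by blast
  then obtain J where "J \<subseteq> D" "real (card I) \<le> ?G D J"
    by (rule subset_expect_obtain) (use D(2) \<open>good D\<close> in auto)
  ultimately show thesis using that D(1) by blast
qed

lemma split_hits_pigeonhole:
  assumes "finite I" "finite D" "finite L" "L \<inter> D = {}" "J \<subseteq> D"
    and many: "real (card I) \<le> (\<Sum>l\<in>I. split_hits t (sum (z l) L) (z l) D J)"
  shows "\<exists>S \<in> {J, D - J, L \<union> J, L \<union> (D - J)}. real (card I) / 4 \<le> card {l\<in>I. t \<le> \<bar>sum (z l) S\<bar>}"
proof -
  have union: "sum (z l) L + sum (z l) S = sum (z l) (L \<union> S)" if "S \<subseteq> D" for l S
    using assms(2-4) that finite_subset by (subst sum.union_disjoint) auto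
  define count where "count S = real (card {l\<in>I. t \<le> \<bar>sum (z l) S\<bar>})" for S
  have count_sum: "count S = (\<Sum>l\<in>I. of_bool (t \<le> \<bar>sum (z l) S\<bar>))" for S
    using assms(1) by (simp add: count_def Int_def)
  have "real (card I) \<le> count J + count (D - J) + count (L \<union> J) + count (L \<union> (D - J))"
    using many assms(5) by (simp add: count_sum split_hits_def sum.distrib union)
  then consider "real (card I) / 4 \<le> count J" | "real (card I) / 4 \<le> count (D - J)"
    | "real (card I) / 4 \<le> count (L \<union> J)" | "real (card I) / 4 \<le> count (L \<union> (D - J))"
    by linarith
  then show ?thesis unfolding count_def by cases auto
qed

lemma card_above_threshold_le:
  assumes "finite S" "0 < c" "\<And>j. j \<in> S \<Longrightarrow> 0 \<le> f j"
  shows "real (card {j\<in>S. c < f j}) \<le> sum f S / c"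
proof -
  have "real (card {j\<in>S. c < f j}) * c = (\<Sum>j\<in>{j\<in>S. c < f j}. c)" by simp
  also have "\<dots> \<le> (\<Sum>j\<in>{j\<in>S. c < f j}. f j)" by (intro sum_mono) auto
  also have "\<dots> \<le> sum f S" using assms by (intro sum_mono2) auto
  finally show ?thesis using assms(2) by (simp add: field_simps)
qed

lemma exists_set_with_many_large_sums:
  fixes z :: "'i \<Rightarrow> 'a \<Rightarrow> real" and b :: real
  assumes "finite I" "I \<noteq> {}" "finite A" "finite L" "A \<inter> L = {}"
    and p: "0 < p" "p \<le> 1/2" and t: "0 < t" "14400 * t \<le> p * a"
    and rows: "\<And>l. l \<in> I \<Longrightarrow> a \<le> \<bar>sum (z l) (L \<union> A)\<bar>"
    and small: "\<And>l j. l \<in> I \<Longrightarrow> j \<in> A \<Longrightarrow> (z l j)\<^sup>2 \<le> p\<^sup>2 * a\<^sup>2 / 25600"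
    and rarely_large: "subset_expect p A (\<lambda>D. of_bool (b < card D)) \<le> 3/100"
  obtains S where "S \<subseteq> L \<union> A" "real (card S) \<le> card L + b"
    "real (card I) / 4 \<le> card {l\<in>I. t \<le> \<bar>sum (z l) S\<bar>}"
proof -
  define good where "good D \<longleftrightarrow> real (card D) \<le> b" for D :: "'a set"
  have row_expect: "1 \<le> subset_expect p A
      (\<lambda>D. of_bool (good D) * subset_expect (1/2) D (split_hits t (sum (z l) L) (z l) D))"
    if "l \<in> I" for l
  proof (rule split_hits_row_expectation [OF assms(3) p t _ small [OF that]])
    show "a \<le> \<bar>sum (z l) L + sum (z l) A\<bar>"
      using rows [OF that] assms(3-5) by (simp add: sum.union_disjoint Int_commute)
    show "subset_expect p A (\<lambda>D. of_bool (\<not> good D)) \<le> 3/100"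
      using rarely_large by (simp add: good_def not_le)
  qed
  obtain D J where D: "D \<subseteq> A" "good D" "J \<subseteq> D"
    and many: "real (card I) \<le> (\<Sum>l\<in>I. split_hits t (sum (z l) L) (z l) D J)"
    by (rule subset_expect_obtain_split [OF assms(3), where p = p and I = I and good = good
          and F = "\<lambda>l. split_hits t (sum (z l) L) (z l)"])
      (use p assms(1,2) row_expect in auto)
  have "finite D" using D(1) assms(3) finite_subset by blast
  then obtain S where S: "S \<in> {J, D - J, L \<union> J, L \<union> (D - J)}"
    and large: "real (card I) / 4 \<le> card {l\<in>I. t \<le> \<bar>sum (z l) S\<bar>}"
    using split_hits_pigeonhole [OF assms(1) _ assms(4) _ D(3) many] D(1) assms(5) by blast
  have "S \<subseteq> L \<union> D" using S D(3) by auto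
  moreover have "card S \<le> card L + card D"
    using card_mono [OF _ \<open>S \<subseteq> L \<union> D\<close>] card_Un_le [of L D] assms(4) \<open>finite D\<close> by simp
  ultimately have "S \<subseteq> L \<union> A" "real (card S) \<le> card L + b"
    using D(1,2) unfolding good_def by auto
  then show thesis using that large by blast
qed

text \<open>This is where the constant \<open>10^7\<close> is calibrated: an entry of size \<open>t * sqrt k\<close> times a
  coordinate with \<open>y j ^ 2 \<le> 2 / (\<delta> * k)\<close> must stay below the smallness level of
  \<open>split_hits_row_expectation\<close> for \<open>p = \<delta> / 16\<close>.\<close>
lemma calibrated_entry_bound:
  fixes a t \<delta> :: real
  assumes "0 < \<delta>" "\<delta> \<le> 1" "0 \<le> t" "10^7 * t \<le> \<delta>\<^sup>2 * a"
  shows "2 * t\<^sup>2 / \<delta> \<le> (\<delta> / 16)\<^sup>2 * a\<^sup>2 / 25600"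
proof -
  have "(10^7 * t)\<^sup>2 \<le> (\<delta>\<^sup>2 * a)\<^sup>2" using assms(3,4) by (intro power_mono) auto
  then have "100000000000000 * t\<^sup>2 \<le> \<delta> * (\<delta> ^ 3 * a\<^sup>2)"
    by (simp add: power_mult_distrib power2_eq_square power3_eq_cube algebra_simps)
  also have "\<dots> \<le> \<delta> ^ 3 * a\<^sup>2" using assms(1,2) by (intro mult_left_le_one_le) auto
  finally have "13107200 * t\<^sup>2 \<le> \<delta> ^ 3 * a\<^sup>2" using zero_le_power2 [of t] by linarith
  then show ?thesis using assms(1) by (simp add: field_simps power2_eq_square power3_eq_cube)
qed

lemma exists_sparse_support_with_many_large_rows:
  fixes T :: "nat \<Rightarrow> nat \<Rightarrow> real" and y :: "nat \<Rightarrow> real"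
  assumes \<delta>: "0 < \<delta>" "\<delta> \<le> 1" "12 \<le> \<delta> * k"
    and unit: "(\<Sum>j<k. (y j)\<^sup>2) \<le> 1"
    and t: "0 < t" "10^7 * t \<le> \<delta>\<^sup>2 * a"
    and rows: "\<And>l. l < m \<Longrightarrow> a \<le> \<bar>\<Sum>j<k. T l j * y j\<bar>"
    and entries: "\<And>l j. l < m \<Longrightarrow> j < k \<Longrightarrow> (T l j)\<^sup>2 \<le> t\<^sup>2 * k"
    and "0 < m"
  shows "\<exists>J \<subseteq> {..<k}. real (card J) \<le> \<delta> * k \<and>
    real m / 4 \<le> card {l\<in>{..<m}. t \<le> \<bar>\<Sum>j\<in>J. T l j * y j\<bar>}"
proof -
  define p where "p = \<delta> / 16"
  define L where "L = {j\<in>{..<k}. 2 / (\<delta> * k) < (y j)\<^sup>2}"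
  define A where "A = {..<k} - L"
  have p: "0 < p" "p \<le> 1/2" using \<delta>(1,2) by (simp_all add: p_def)
  have \<delta>k_pos: "0 < \<delta> * k" using \<delta>(3) by linarith
  have "0 < (10::real)^7 * t" using t(1) by simp
  then have "0 < \<delta>\<^sup>2 * a" using t(2) by (rule less_le_trans)
  then have a_pos: "0 < a" by (simp add: zero_less_mult_iff)
  have "real (card L) \<le> (\<Sum>j<k. (y j)\<^sup>2) / (2 / (\<delta> * k))"
    unfolding L_def using \<delta>k_pos by (intro card_above_threshold_le) auto
  also have "\<dots> \<le> 1 / (2 / (\<delta> * k))"
    using unit \<delta>k_pos by (intro divide_right_mono) auto
  finally have card_L: "real (card L) \<le> \<delta> * k / 2" by simp
  have "\<delta>\<^sup>2 * a \<le> \<delta> * a"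
    using \<delta>(1,2) a_pos by (intro mult_right_mono) (auto simp: power2_eq_square mult_left_le_one_le)
  then have pa: "14400 * t \<le> p * a" using t unfolding p_def by simp
  have small: "(T l j * y j)\<^sup>2 \<le> p\<^sup>2 * a\<^sup>2 / 25600" if "l \<in> {..<m}" "j \<in> A" for l j
  proof -
    have "(T l j * y j)\<^sup>2 \<le> (t\<^sup>2 * k) * (2 / (\<delta> * k))"
      unfolding power_mult_distrib using that entries \<delta>k_pos by (intro mult_mono) (auto simp: A_def L_def)
    also have "\<dots> = 2 * t\<^sup>2 / \<delta>" using \<delta>k_pos by (auto simp: zero_less_mult_iff)
    finally show ?thesis
      using calibrated_entry_bound [OF \<delta>(1,2) _ t(2)] t(1) unfolding p_def by linarith
  qed
  have "subset_expect p A (\<lambda>D. of_bool (\<delta> * k / 2 < card D)) \<le> 1 / (49 * p * k)"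
    using subset_expect_card_tail [of A k p] p \<delta>k_pos
    by (auto simp: A_def p_def zero_less_mult_iff card_Diff_subset_Int)
  also have "\<dots> \<le> 3/100" using \<delta>(3) by (simp add: p_def field_simps)
  finally have rarely_large: "subset_expect p A (\<lambda>D. of_bool (\<delta> * k / 2 < card D)) \<le> 3/100" .
  have LA: "L \<union> A = {..<k}" by (auto simp: A_def L_def)
  obtain S where S: "S \<subseteq> L \<union> A" "real (card S) \<le> card L + \<delta> * k / 2"
    and large: "real m / 4 \<le> card {l\<in>{..<m}. t \<le> \<bar>\<Sum>j\<in>S. T l j * y j\<bar>}"
    by (rule exists_set_with_many_large_sums [OF _ _ _ _ _ p t(1) pa, where I = "{..<m}"
          and z = "\<lambda>l j. T l j * y j" and L = L and A = A and b = "\<delta> * k / 2"])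
      (use rows small rarely_large \<open>0 < m\<close> LA in \<open>auto simp: A_def L_def\<close>)
  have "S \<subseteq> {..<k}" using S(1) by (auto simp: A_def L_def)
  moreover have "real (card S) \<le> \<delta> * k" using S(2) card_L by linarith
  ultimately show ?thesis using large by blast
qed

section \<open>Order statistics and coordinate projections\<close>

lemma sorted_nth_ge_of_count:
  fixes ys :: "real list"
  assumes "sorted ys" "1 \<le> r" "r \<le> length (filter (\<lambda>v. t \<le> v) ys)"
  shows "t \<le> ys ! (length ys - r)"
proof (rule ccontr)
  let ?n = "length ys"
  assume small: "\<not> t \<le> ys ! (?n - r)"
  have r_le: "r \<le> ?n" using assms(3) length_filter_le [of "\<lambda>v. t \<le> v" ys] by linarith
  have "{i. i < ?n \<and> t \<le> ys ! i} \<subseteq> {?n - r + 1..<?n}"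
  proof (rule subsetI, rule ccontr)
    fix i assume i: "i \<in> {i. i < ?n \<and> t \<le> ys ! i}" "i \<notin> {?n - r + 1..<?n}"
    then have "ys ! i \<le> ys ! (?n - r)"
      using assms(1,2) r_le by (intro sorted_nth_mono) auto
    with i small show False by auto
  qed
  then have "card {i. i < ?n \<and> t \<le> ys ! i} \<le> r - 1"
    using card_mono [of "{?n - r + 1..<?n}"] r_le assms(2) by fastforce
  then show False using assms(2,3) by (simp add: length_filter_conv_card)
qed

lemma kth_largest_ge:
  assumes "finite I" "1 \<le> r" "r \<le> card {l\<in>I. t \<le> f l}"
  shows "t \<le> kth_largest r I f"
proof -
  let ?xs = "sorted_list_of_set I"
  let ?ys = "sort (map f ?xs)"
  have count: "length (filter (\<lambda>v. t \<le> v) ?ys) = card {l\<in>I. t \<le> f l}"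
  proof -
    have "length (filter (\<lambda>v. t \<le> v) ?ys) = length (filter (\<lambda>l. t \<le> f l) ?xs)"
      by (simp add: filter_sort filter_map o_def)
    also have "\<dots> = card (set (filter (\<lambda>l. t \<le> f l) ?xs))"
      by (metis distinct_card distinct_filter distinct_sorted_list_of_set)
    finally show ?thesis using assms(1) by simp
  qed
  have r_le: "r \<le> card I"
    using assms(1,3) card_mono [of I "{l\<in>I. t \<le> f l}"] by auto
  have "kth_largest r I f = ?ys ! (length ?ys - r)"
    using assms(1,2) r_le by (simp add: kth_largest_def rev_nth Suc_diff_le)
  then show ?thesis
    using sorted_nth_ge_of_count [of ?ys r t] assms(2,3) count by simp
qed

lemma kth_largest_nonneg:
  assumes "finite I" "\<And>l. l \<in> I \<Longrightarrow> 0 \<le> f l"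
  shows "0 \<le> kth_largest r I f"
proof (cases "r = 0 \<or> r > card I")
  case False
  let ?ys = "rev (sort (map f (sorted_list_of_set I)))"
  have "length ?ys = card I" using assms(1) by simp
  then have "r - 1 < length ?ys" using False by linarith
  then have "?ys ! (r - 1) \<in> set ?ys" by (rule nth_mem)
  then have "?ys ! (r - 1) \<in> f ` I" using assms(1) by simp
  then show ?thesis using False assms(2) by (auto simp: kth_largest_def)
qed (auto simp: kth_largest_def)

lemma mat_vec_coord_proj:
  assumes "J \<subseteq> {..<k}"
  shows "mat_vec k T (coord_proj J y) l = (\<Sum>j\<in>J. T l j * y j)"
proof -
  have "mat_vec k T (coord_proj J y) l = (\<Sum>j<k. if j \<in> J then T l j * y j else 0)"
    unfolding mat_vec_def coord_proj_def by (intro sum.cong) auto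
  also have "\<dots> = (\<Sum>j\<in>J. T l j * y j)"
    using assms by (simp add: sum.If_cases Int_absorb1)
  finally show ?thesis .
qed

lemma exists_coord_proj_kth_largest_ge:
  fixes T :: "nat \<Rightarrow> nat \<Rightarrow> real" and y :: "nat \<Rightarrow> real"
  assumes \<delta>: "0 < \<delta>" "\<delta> \<le> 1" "12 \<le> \<delta> * k"
    and unit: "(\<Sum>j<k. (y j)\<^sup>2) \<le> 1" and "4 \<le> m"
    and t: "0 < t" "10^7 * t \<le> \<delta>\<^sup>2 * a"
    and rows: "\<And>l. l < m \<Longrightarrow> a \<le> \<bar>mat_vec k T y l\<bar>"
    and entries: "\<And>l j. l < m \<Longrightarrow> j < k \<Longrightarrow> \<bar>T l j\<bar> \<le> t * sqrt k"
  shows "\<exists>J \<subseteq> {..<k}. real (card J) \<le> \<delta> * k \<and>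
    t \<le> kth_largest (m div 4) {..<m} (\<lambda>l. \<bar>mat_vec k T (coord_proj J y) l\<bar>)"
proof -
  have "(T l j)\<^sup>2 \<le> t\<^sup>2 * k" if "l < m" "j < k" for l j
    using power_mono [OF entries [OF that], of 2] by (simp add: power_mult_distrib)
  moreover have "a \<le> \<bar>\<Sum>j<k. T l j * y j\<bar>" if "l < m" for l
    using rows [OF that] by (simp add: mat_vec_def)
  ultimately obtain J where J: "J \<subseteq> {..<k}" "real (card J) \<le> \<delta> * k"
    and large: "real m / 4 \<le> card {l\<in>{..<m}. t \<le> \<bar>\<Sum>j\<in>J. T l j * y j\<bar>}"
    using exists_sparse_support_with_many_large_rows [OF \<delta> unit t, of m T] \<open>4 \<le> m\<close> by auto
  have "real (m div 4) \<le> real m / 4" by linarith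
  then have "m div 4 \<le> card {l\<in>{..<m}. t \<le> \<bar>mat_vec k T (coord_proj J y) l\<bar>}"
    using large by (simp add: mat_vec_coord_proj [OF J(1)])
  then have "t \<le> kth_largest (m div 4) {..<m} (\<lambda>l. \<bar>mat_vec k T (coord_proj J y) l\<bar>)"
    using \<open>4 \<le> m\<close> by (intro kth_largest_ge) auto
  then show ?thesis using J by blast
qed

lemma exists_coord_proj_bound:
  fixes T :: "nat \<Rightarrow> nat \<Rightarrow> real" and y :: "nat \<Rightarrow> real"
  assumes \<delta>: "0 < \<delta>" "\<delta> \<le> 1" "12 \<le> \<delta> * k"
    and unit: "(\<Sum>j<k. (y j)\<^sup>2) \<le> 1" and "4 \<le> m"
    and rows: "\<And>l. l < m \<Longrightarrow> a \<le> \<bar>mat_vec k T y l\<bar>"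
    and entries: "\<And>l j. l < m \<Longrightarrow> j < k \<Longrightarrow> \<bar>T l j\<bar> \<le> M"
  shows "\<exists>J \<subseteq> {..<k}. real (card J) \<le> \<delta> * k \<and>
    \<delta>\<^sup>2 * a / 10^7 \<le> M / sqrt k + kth_largest (m div 4) {..<m} (\<lambda>l. \<bar>mat_vec k T (coord_proj J y) l\<bar>)"
proof -
  let ?kth = "\<lambda>J. kth_largest (m div 4) {..<m} (\<lambda>l. \<bar>mat_vec k T (coord_proj J y) l\<bar>)"
  define t where "t = \<delta>\<^sup>2 * a / 10^7"
  have "0 < k" using \<delta>(3) by (cases "k = 0") auto
  then have "0 \<le> M" using entries [of 0 0] \<open>4 \<le> m\<close> by force
  then have M_sqrt: "0 \<le> M / sqrt k" by simp
  show ?thesis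
  proof (cases "t \<le> M / sqrt k")
    case True
    have "0 \<le> ?kth {}" by (intro kth_largest_nonneg) auto
    then show ?thesis using True \<delta>(3) unfolding t_def by (intro exI [of _ "{}"]) auto
  next
    case False
    have "0 < sqrt (real k)" using \<open>0 < k\<close> by simp
    then have "M < t * sqrt k" using False by (simp add: not_le pos_divide_less_eq)
    then have "\<bar>T l j\<bar> \<le> t * sqrt k" if "l < m" "j < k" for l j
      using entries [OF that] by linarith
    moreover have "0 < t" using False M_sqrt by linarith
    ultimately obtain J where J: "J \<subseteq> {..<k}" "real (card J) \<le> \<delta> * k" "t \<le> ?kth J"
      using exists_coord_proj_kth_largest_ge [OF \<delta> unit \<open>4 \<le> m\<close>, of t a T] rows
      unfolding t_def by auto
    have "t \<le> M / sqrt k + ?kth J" using J(3) M_sqrt by linarith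
    with J(1,2) show ?thesis unfolding t_def by blast
  qed
qed

theorem lemma4p1:
  shows "\<exists>C::real. C > 0 \<and>
    (\<forall>(\<delta>::real) (k::nat) (m::nat) (T::nat \<Rightarrow> nat \<Rightarrow> real) (y::nat \<Rightarrow> real).
      0 < \<delta> \<and> \<delta> \<le> 1 \<and> real k \<ge> 12 / \<delta>^2 \<and> m \<ge> 4 \<and>
      (\<Sum>j<k. (y j)^2) = 1
      \<longrightarrow> (\<exists>J. J \<subseteq> {..<k} \<and> real (card J) \<le> \<delta> * real k \<and>
            (1 / C) * \<delta>^2 * (MIN l\<in>{..<m}. \<bar>mat_vec k T y l\<bar>)
              \<le> (MAX (i, j)\<in>{..<m} \<times> {..<k}. \<bar>T i j\<bar>) / sqrt (real k)
                 + kth_largest (m div 4) {..<m}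
                     (\<lambda>l. \<bar>mat_vec k T (coord_proj J y) l\<bar>)))"
proof (intro exI [of _ "10^7"] conjI allI impI)
  fix \<delta> :: real and k m :: nat and T :: "nat \<Rightarrow> nat \<Rightarrow> real" and y :: "nat \<Rightarrow> real"
  assume H: "0 < \<delta> \<and> \<delta> \<le> 1 \<and> real k \<ge> 12 / \<delta>^2 \<and> m \<ge> 4 \<and> (\<Sum>j<k. (y j)^2) = 1"
  have "12 / \<delta> \<le> \<delta> * k"
    using H mult_left_mono [of "12 / \<delta>\<^sup>2" "real k" \<delta>] by (simp add: power2_eq_square)
  moreover have "12 \<le> 12 / \<delta>" using H by (simp add: field_simps)
  ultimately have \<delta>k: "12 \<le> \<delta> * k" by linarith
  have "\<bar>T l j\<bar> \<le> (MAX (i, j)\<in>{..<m} \<times> {..<k}. \<bar>T i j\<bar>)" if "l < m" "j < k" for l j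
  proof -
    have "\<bar>T l j\<bar> \<in> (\<lambda>(i, j). \<bar>T i j\<bar>) ` ({..<m} \<times> {..<k})" using that by force
    then show ?thesis by (intro Max_ge) auto
  qed
  moreover have "(MIN l\<in>{..<m}. \<bar>mat_vec k T y l\<bar>) \<le> \<bar>mat_vec k T y l\<bar>" if "l < m" for l
    using that by (intro Min_le) auto
  ultimately show "\<exists>J. J \<subseteq> {..<k} \<and> real (card J) \<le> \<delta> * k \<and>
      1 / 10^7 * \<delta>\<^sup>2 * (MIN l\<in>{..<m}. \<bar>mat_vec k T y l\<bar>)
        \<le> (MAX (i, j)\<in>{..<m} \<times> {..<k}. \<bar>T i j\<bar>) / sqrt k
          + kth_largest (m div 4) {..<m} (\<lambda>l. \<bar>mat_vec k T (coord_proj J y) l\<bar>)"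
    using exists_coord_proj_bound [OF _ _ \<delta>k, of y m] H by auto
qed simp

end
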